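(* Let $G=(V,E)$ be a strongly connected directed multigraph with distinct vertices $s,t\in V$ such that $G$ contains at least one arc $(t,s)$. Let $f$ be a flow from $s$ to $t$ in $G$ that does not use any arc $(t,s)$. If there is a directed path from $s$ to $t$ in $G_f$, then $G_f$ is strongly connected.
   Context: A flow from $s$ to $t$ in $G$ is a set of arc-disjoint directed paths from $s$ to $t$ in $G$. The residual graph $G_f$ is obtained from $G$ by reversing each arc lying on a path of $f$. (In the paper, $G$ arises from an input graph by adding $m$ parallel arcs $(t,s)$ and keeping only the strongly connected component containing $s$ and $t$.) *)

theory Defs
  imports "Graph_Theory.Graph_Theory"
begin

text \<open>A flow from s to t: a (finite) set of pairwise arc-disjoint directed paths from s to t,
  each path given as its list of arcs.\<close>
definition is_flow :: "('a,'b) pre_digraph \<Rightarrow> 'a \<Rightarrow> 'a \<Rightarrow> 'b list set \<Rightarrow> bool" where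
  "is_flow G s t f \<equiv> finite f \<and> (\<forall>p\<in>f. pre_digraph.apath G s p t)
     \<and> (\<forall>p\<in>f. \<forall>q\<in>f. p \<noteq> q \<longrightarrow> set p \<inter> set q = {})"

definition flow_arcs :: "'b list set \<Rightarrow> 'b set" where
  "flow_arcs f \<equiv> \<Union> (set ` f)"

definition residual :: "('a,'b) pre_digraph \<Rightarrow> 'b list set \<Rightarrow> ('a,'b) pre_digraph" where
  "residual G f \<equiv> G\<lparr> tail := (\<lambda>e. if e \<in> flow_arcs f then head G e else tail G e),
                      head := (\<lambda>e. if e \<in> flow_arcs f then tail G e else head G e) \<rparr>"

end

theory Submission
  imports Defs
begin

text \<open>Every arc e of G keeps its endpoints connected in G_f. If e is not on the flow it is still
  an arc of G_f. If e lies on a flow path p = p1 @ e # p2 from s to t, then in G_f the reversed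
  arcs of p1 lead from tail e back to s, the assumed path leads from s to t, and the reversed arcs
  of p2 lead from t back to head e. Hence reachability in G implies reachability in G_f, which has
  the same vertices, so strong connectivity carries over.\<close>

lemma (in wf_digraph) reachable_if_arc_ends_reachable:
  assumes "verts G \<subseteq> verts H"
    and arc_ends: "\<And>e. e \<in> arcs G \<Longrightarrow> tail G e \<rightarrow>\<^sup>*\<^bsub>H\<^esub> head G e"
    and "u \<rightarrow>\<^sup>*\<^bsub>G\<^esub> v"
  shows "u \<rightarrow>\<^sup>*\<^bsub>H\<^esub> v"
  using \<open>u \<rightarrow>\<^sup>*\<^bsub>G\<^esub> v\<close>
proof (induction rule: reachable_induct)
  case base
  then show ?case using assms(1) by (auto simp: reachable_def)
next
  case (step x y)
  then obtain e where "e \<in> arcs G" "tail G e = x" "head G e = y"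
    by (auto simp: arcs_ends_def arc_to_ends_def)
  with arc_ends step.IH show ?case
    unfolding reachable_def by (metis rtrancl_on_trans)
qed

lemma (in wf_digraph) strongly_connected_if_arc_ends_reachable:
  assumes "strongly_connected G" and "verts H = verts G"
    and "\<And>e. e \<in> arcs G \<Longrightarrow> tail G e \<rightarrow>\<^sup>*\<^bsub>H\<^esub> head G e"
  shows "strongly_connected H"
  using assms reachable_if_arc_ends_reachable[of H]
  unfolding strongly_connected_def by auto

lemma verts_residual [simp]: "verts (residual G f) = verts G"
  and arcs_residual [simp]: "arcs (residual G f) = arcs G"
  and tail_residual: "tail (residual G f) e = (if e \<in> flow_arcs f then head G e else tail G e)"
  and head_residual: "head (residual G f) e = (if e \<in> flow_arcs f then tail G e else head G e)"
  by (auto simp: residual_def)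

lemma wf_digraph_residual: "wf_digraph G \<Longrightarrow> wf_digraph (residual G f)"
  unfolding wf_digraph_def by (auto simp: tail_residual head_residual)

lemma reachable_residual_rev_awalk:
  assumes "wf_digraph G" and "pre_digraph.awalk G x q y" and "set q \<subseteq> flow_arcs f"
  shows "y \<rightarrow>\<^sup>*\<^bsub>residual G f\<^esub> x"
proof -
  interpret G: wf_digraph G by fact
  interpret H: wf_digraph "residual G f" using wf_digraph_residual[OF assms(1)] .
  show ?thesis
    using assms(2,3)
  proof (induction q arbitrary: x)
    case Nil
    then show ?case by (auto simp: G.awalk_def)
  next
    case (Cons e q)
    then have e: "e \<in> arcs G" "tail G e = x" "e \<in> flow_arcs f"
      and walk: "G.awalk (head G e) q y"
      by (auto simp: G.awalk_Cons_iff)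
    have "y \<rightarrow>\<^sup>*\<^bsub>residual G f\<^esub> head G e" using Cons.IH[OF walk] Cons.prems by simp
    also have "head G e \<rightarrow>\<^bsub>residual G f\<^esub> x"
      using e by (intro H.dominatesI[of e]) (auto simp: tail_residual head_residual arc_to_ends_def)
    finally show ?case .
  qed
qed

lemma reachable_residual_arc_ends:
  assumes "wf_digraph G"
    and flow_walks: "\<forall>p\<in>f. pre_digraph.awalk G s p t"
    and s_t: "s \<rightarrow>\<^sup>*\<^bsub>residual G f\<^esub> t"
    and e: "e \<in> arcs G"
  shows "tail G e \<rightarrow>\<^sup>*\<^bsub>residual G f\<^esub> head G e"
proof -
  interpret G: wf_digraph G by fact
  interpret H: wf_digraph "residual G f" using wf_digraph_residual[OF assms(1)] .
  show ?thesis
  proof (cases "e \<in> flow_arcs f")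
    case False
    then show ?thesis
      using e by (intro H.reachable_adjI H.dominatesI[of e])
        (auto simp: tail_residual head_residual arc_to_ends_def)
  next
    case True
    then obtain p where p: "p \<in> f" "e \<in> set p" by (auto simp: flow_arcs_def)
    then obtain p1 p2 where p_split: "p = p1 @ e # p2" by (meson split_list)
    have on_flow: "set p1 \<subseteq> flow_arcs f" "set p2 \<subseteq> flow_arcs f"
      using p p_split by (auto simp: flow_arcs_def)
    have "G.awalk s p t" using flow_walks p by blast
    then have "G.awalk s p1 (tail G e)" "G.awalk (head G e) p2 t"
      unfolding p_split by (auto simp: G.awalk_Cons_iff)
    then have "tail G e \<rightarrow>\<^sup>*\<^bsub>residual G f\<^esub> s" "t \<rightarrow>\<^sup>*\<^bsub>residual G f\<^esub> head G e"
      using reachable_residual_rev_awalk[OF assms(1)] on_flow by auto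
    with s_t show ?thesis by (metis H.reachable_trans)
  qed
qed

theorem lemma1p3:
  fixes G :: "('a,'b) pre_digraph" and s t :: 'a and f :: "'b list set"
  assumes "fin_digraph G"
    and "strongly_connected G"
    and "s \<in> verts G" and "t \<in> verts G" and "s \<noteq> t"
    and "\<exists>e\<in>arcs G. tail G e = t \<and> head G e = s"
    and "is_flow G s t f"
    and "\<forall>e\<in>flow_arcs f. \<not> (tail G e = t \<and> head G e = s)"
    and "\<exists>p. pre_digraph.apath (residual G f) s p t"
  shows "strongly_connected (residual G f)"
proof -
  interpret G: fin_digraph G by fact
  interpret H: wf_digraph "residual G f" by (rule wf_digraph_residual) unfold_locales
  have flow_walks: "\<forall>p\<in>f. G.awalk s p t"
    using \<open>is_flow G s t f\<close> by (auto simp: is_flow_def G.apath_def)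
  have "s \<rightarrow>\<^sup>*\<^bsub>residual G f\<^esub> t"
    using assms(9) H.reachable_awalk H.apath_def by blast
  with flow_walks have arc_ends: "tail G e \<rightarrow>\<^sup>*\<^bsub>residual G f\<^esub> head G e" if "e \<in> arcs G" for e
    using reachable_residual_arc_ends[OF G.wf_digraph_axioms] that by blast
  show ?thesis
    by (rule G.strongly_connected_if_arc_ends_reachable[OF \<open>strongly_connected G\<close> _ arc_ends]) simp
qed

end
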